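(* Fix a full-support skill distribution $p\in\Delta(\Theta)$ and two full-support perceptions $q,q'\in\Delta(\Theta)$. (a) If $q'\succsim_{LR} q$, then for every signal structure $\langle S,\pi\rangle$ and every monotone firm $A\subset\mathcal{A}_M$, $$W_A(p,q',\langle S,\pi\rangle)\ \ge\ W_A(p,q,\langle S,\pi\rangle).$$ (b) If $q'\not\succsim_{LR} q$, then there exists a signal structure $\langle S,\pi\rangle$ such that for every monotone firm $A\subset\mathcal{A}_M$, $$W_A(p,q',\langle S,\pi\rangle)\ <\ W_A(p,q,\langle S,\pi\rangle).$$
   Context: Let $\Theta\subset\mathbb{R}$ be a finite set of skill types with $|\Theta|\ge 2$. A task is a vector $a\in\mathcal{A}:=\mathbb{R}^\Theta$. A firm is a non-empty finite set $A\subset\mathcal{A}$. The firm is monotone if $A\subset\mathcal{A}_M:=\{a\in\mathbb{R}^\Theta: a(\theta')>a(\theta)\text{ whenever }\theta'>\theta\}$. A signal structure $\langle S,\pi\rangle$ consists of a non-empty finite set $S$ and a map $\pi:S\times\Theta\to[0,1]$ with $\sum_{s\in S}\pi(s|\theta)=1$ for each $\theta$, such that every $s\in S$ has $\pi(s|\theta)>0$ for some $\theta$. The true skill distribution $p$ and the perception $q$ are full-support elements of $\Delta(\Theta)$. The posterior is $q_{\langle S,\pi\rangle}(\theta|s):=q(\theta)\pi(s|\theta)/\sum_{\theta'}q(\theta')\pi(s|\theta')$. Pay of a worker with signal $s$ is $w_A(s,q,\langle S,\pi\rangle):=\max_{a\in A}\sum_{\theta}q_{\langle S,\pi\rangle}(\theta|s)a(\theta)$.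 Average pay is $W_A(p,q,\langle S,\pi\rangle):=\sum_{\theta}p(\theta)\sum_{s\in S}\pi(s|\theta)w_A(s,q,\langle S,\pi\rangle)$. Likelihood-ratio order: $q'\succsim_{LR}q$ means $q(\theta)q'(\theta')\ge q(\theta')q'(\theta)$ whenever $\theta'>\theta$. *)

theory Defs
  imports "HOL-Analysis.Analysis"
begin

text \<open>Skill types: a finite set Theta of reals. Distributions, tasks and
signal likelihoods are represented as functions; only their values on Theta
(resp. S x Theta) matter.\<close>

definition full_support :: "real set \<Rightarrow> (real \<Rightarrow> real) \<Rightarrow> bool" where
  "full_support Theta p \<longleftrightarrow> (\<forall>\<theta>\<in>Theta. p \<theta> > 0) \<and> (\<Sum>\<theta>\<in>Theta. p \<theta>) = 1"

definition signal_structure :: "real set \<Rightarrow> 's set \<Rightarrow> ('s \<Rightarrow> real \<Rightarrow> real) \<Rightarrow> bool" where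
  "signal_structure Theta S \<pi> \<longleftrightarrow>
     finite S \<and> S \<noteq> {} \<and>
     (\<forall>s\<in>S. \<forall>\<theta>\<in>Theta. 0 \<le> \<pi> s \<theta> \<and> \<pi> s \<theta> \<le> 1) \<and>
     (\<forall>\<theta>\<in>Theta. (\<Sum>s\<in>S. \<pi> s \<theta>) = 1) \<and>
     (\<forall>s\<in>S. \<exists>\<theta>\<in>Theta. \<pi> s \<theta> > 0)"

definition monotone_task :: "real set \<Rightarrow> (real \<Rightarrow> real) \<Rightarrow> bool" where
  "monotone_task Theta a \<longleftrightarrow> (\<forall>\<theta>\<in>Theta. \<forall>\<theta>'\<in>Theta. \<theta>' > \<theta> \<longrightarrow> a \<theta>' > a \<theta>)"

definition monotone_firm :: "real set \<Rightarrow> (real \<Rightarrow> real) set \<Rightarrow> bool" where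
  "monotone_firm Theta A \<longleftrightarrow> finite A \<and> A \<noteq> {} \<and> (\<forall>a\<in>A. monotone_task Theta a)"

definition posterior :: "real set \<Rightarrow> (real \<Rightarrow> real) \<Rightarrow> ('s \<Rightarrow> real \<Rightarrow> real) \<Rightarrow> 's \<Rightarrow> real \<Rightarrow> real" where
  "posterior Theta q \<pi> s \<theta> = q \<theta> * \<pi> s \<theta> / (\<Sum>\<theta>'\<in>Theta. q \<theta>' * \<pi> s \<theta>')"

definition pay :: "real set \<Rightarrow> (real \<Rightarrow> real) set \<Rightarrow> 's \<Rightarrow> (real \<Rightarrow> real) \<Rightarrow> ('s \<Rightarrow> real \<Rightarrow> real) \<Rightarrow> real" where
  "pay Theta A s q \<pi> = Max ((\<lambda>a. \<Sum>\<theta>\<in>Theta. posterior Theta q \<pi> s \<theta> * a \<theta>) ` A)"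

definition avg_pay :: "real set \<Rightarrow> (real \<Rightarrow> real) set \<Rightarrow> (real \<Rightarrow> real) \<Rightarrow> (real \<Rightarrow> real) \<Rightarrow> 's set \<Rightarrow> ('s \<Rightarrow> real \<Rightarrow> real) \<Rightarrow> real" where
  "avg_pay Theta A p q S \<pi> = (\<Sum>\<theta>\<in>Theta. p \<theta> * (\<Sum>s\<in>S. \<pi> s \<theta> * pay Theta A s q \<pi>))"

definition LR_ge :: "real set \<Rightarrow> (real \<Rightarrow> real) \<Rightarrow> (real \<Rightarrow> real) \<Rightarrow> bool" where
  "LR_ge Theta q' q \<longleftrightarrow> (\<forall>\<theta>\<in>Theta. \<forall>\<theta>'\<in>Theta. \<theta>' > \<theta> \<longrightarrow> q \<theta> * q' \<theta>' \<ge> q \<theta>' * q' \<theta>)"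

end

theory Submission
  imports Defs
begin

text \<open>
(a) The likelihood \<pi>(s|\<theta>) is a common factor of the two unnormalised posteriors, so for
every signal the posterior under q' likelihood-ratio dominates the posterior under q. A
likelihood-ratio dominant distribution gives every increasing task a higher expectation: the
difference of cross-multiplied expectations is half a double sum over pairs of types whose
terms are all nonnegative. Hence the pay after every signal, and the average pay, rise.

(b) If q(\<theta>) q'(\<theta>') < q(\<theta>') q'(\<theta>) for some \<theta> < \<theta>', take the signal structure that pools
\<theta> and \<theta>' and reveals every other type. Revealed workers are paid the same under both
perceptions, while after the pooled signal q' puts relatively less weight on the higher type
\<theta>', which strictly lowers the posterior value of every strictly increasing task.
\<close>

lemma Max_image_mono:
  fixes f g :: "'a \<Rightarrow> 'b::linorder"
  assumes "finite A" "A \<noteq> {}" "\<And>a. a \<in> A \<Longrightarrow> f a \<le> g a"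
  shows "Max (f ` A) \<le> Max (g ` A)"
proof -
  obtain x where "x \<in> A" "Max (f ` A) = f x" using assms(1,2) by (rule obtains_MAX)
  then show ?thesis using assms by (auto simp: Max_ge_iff)
qed

lemma Max_image_strict_mono:
  fixes f g :: "'a \<Rightarrow> 'b::linorder"
  assumes "finite A" "A \<noteq> {}" "\<And>a. a \<in> A \<Longrightarrow> f a < g a"
  shows "Max (f ` A) < Max (g ` A)"
proof -
  obtain x where "x \<in> A" "Max (f ` A) = f x" using assms(1,2) by (rule obtains_MAX)
  then show ?thesis using assms by (auto simp: Max_gr_iff)
qed

lemma cross_sum_symmetrization:
  fixes u u' a :: "'a \<Rightarrow> 'b::comm_ring_1"
  shows "(\<Sum>x\<in>T. \<Sum>y\<in>T. (a y - a x) * (u x * u' y - u y * u' x))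
       = 2 * (sum u T * (\<Sum>y\<in>T. u' y * a y) - sum u' T * (\<Sum>y\<in>T. u y * a y))"
proof -
  define D where "D x y = u x * (u' y * a y) - u' x * (u y * a y)" for x y
  have "(\<Sum>x\<in>T. \<Sum>y\<in>T. (a y - a x) * (u x * u' y - u y * u' x))
      = (\<Sum>x\<in>T. \<Sum>y\<in>T. D x y) + (\<Sum>x\<in>T. \<Sum>y\<in>T. D y x)"
    by (simp add: D_def sum.distrib[symmetric] algebra_simps)
  also have "(\<Sum>x\<in>T. \<Sum>y\<in>T. D y x) = (\<Sum>x\<in>T. \<Sum>y\<in>T. D x y)"
    by (rule sum.swap)
  also have "(\<Sum>x\<in>T. \<Sum>y\<in>T. D x y)
      = sum u T * (\<Sum>y\<in>T. u' y * a y) - sum u' T * (\<Sum>y\<in>T. u y * a y)"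
    by (simp add: D_def sum_subtractf sum_product)
  finally show ?thesis by simp
qed

lemma likelihood_ratio_cross_sum_le:
  fixes u u' a :: "'a::linorder \<Rightarrow> 'b::linordered_idom"
  assumes LR: "\<And>x y. x \<in> T \<Longrightarrow> y \<in> T \<Longrightarrow> x < y \<Longrightarrow> u y * u' x \<le> u x * u' y"
    and mono: "\<And>x y. x \<in> T \<Longrightarrow> y \<in> T \<Longrightarrow> x < y \<Longrightarrow> a x \<le> a y"
  shows "sum u' T * (\<Sum>y\<in>T. u y * a y) \<le> sum u T * (\<Sum>y\<in>T. u' y * a y)"
proof -
  have "0 \<le> (a y - a x) * (u x * u' y - u y * u' x)" if "x \<in> T" "y \<in> T" for x y
  proof (cases x y rule: linorder_cases)
    case less
    then show ?thesis using LR mono that by (simp add: mult_nonneg_nonneg)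
  next
    case greater
    then show ?thesis using LR mono that by (simp add: mult_nonpos_nonpos)
  qed simp
  then have "0 \<le> (\<Sum>x\<in>T. \<Sum>y\<in>T. (a y - a x) * (u x * u' y - u y * u' x))"
    by (intro sum_nonneg) auto
  then show ?thesis unfolding cross_sum_symmetrization by simp
qed

lemma two_point_mean_strict_mono:
  fixes u\<^sub>1 u\<^sub>2 v\<^sub>1 v\<^sub>2 \<alpha> \<beta> :: real
  assumes "0 < u\<^sub>1" "0 < u\<^sub>2" "0 < v\<^sub>1" "0 < v\<^sub>2" "\<alpha> < \<beta>" "v\<^sub>1 * u\<^sub>2 < v\<^sub>2 * u\<^sub>1"
  shows "(u\<^sub>1 * \<alpha> + u\<^sub>2 * \<beta>) / (u\<^sub>1 + u\<^sub>2) < (v\<^sub>1 * \<alpha> + v\<^sub>2 * \<beta>) / (v\<^sub>1 + v\<^sub>2)"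
proof -
  have "(v\<^sub>1 * \<alpha> + v\<^sub>2 * \<beta>) * (u\<^sub>1 + u\<^sub>2) - (u\<^sub>1 * \<alpha> + u\<^sub>2 * \<beta>) * (v\<^sub>1 + v\<^sub>2)
      = (\<beta> - \<alpha>) * (v\<^sub>2 * u\<^sub>1 - v\<^sub>1 * u\<^sub>2)"
    by (simp add: algebra_simps)
  also have "\<dots> > 0" using assms by simp
  finally show ?thesis using assms by (simp add: divide_simps)
qed

lemma posterior_expectation:
  "(\<Sum>\<theta>\<in>Theta. posterior Theta q \<pi> s \<theta> * a \<theta>)
     = (\<Sum>\<theta>\<in>Theta. q \<theta> * \<pi> s \<theta> * a \<theta>) / (\<Sum>\<theta>\<in>Theta. q \<theta> * \<pi> s \<theta>)"
  unfolding posterior_def by (simp add: sum_divide_distrib)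

lemma posterior_expectation_mono_LR:
  assumes "finite Theta" and LR: "LR_ge Theta q' q"
    and q: "\<And>\<theta>. \<theta> \<in> Theta \<Longrightarrow> 0 < q \<theta>" and q': "\<And>\<theta>. \<theta> \<in> Theta \<Longrightarrow> 0 < q' \<theta>"
    and \<pi>: "\<And>\<theta>. \<theta> \<in> Theta \<Longrightarrow> 0 \<le> \<pi> s \<theta>" "\<exists>\<theta>\<in>Theta. 0 < \<pi> s \<theta>"
    and mono: "\<And>\<theta> \<theta>'. \<theta> \<in> Theta \<Longrightarrow> \<theta>' \<in> Theta \<Longrightarrow> \<theta> < \<theta>' \<Longrightarrow> a \<theta> \<le> a \<theta>'"
  shows "(\<Sum>\<theta>\<in>Theta. posterior Theta q \<pi> s \<theta> * a \<theta>)
           \<le> (\<Sum>\<theta>\<in>Theta. posterior Theta q' \<pi> s \<theta> * a \<theta>)"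
proof -
  define u where "u \<theta> = q \<theta> * \<pi> s \<theta>" for \<theta>
  define u' where "u' \<theta> = q' \<theta> * \<pi> s \<theta>" for \<theta>
  have pos: "0 < sum u Theta" "0 < sum u' Theta"
    unfolding u_def u'_def using assms
    by (auto intro!: sum_pos2 simp: less_imp_le)
  have "u \<theta>' * u' \<theta> \<le> u \<theta> * u' \<theta>'" if "\<theta> \<in> Theta" "\<theta>' \<in> Theta" "\<theta> < \<theta>'" for \<theta> \<theta>'
  proof -
    have "q \<theta>' * q' \<theta> * (\<pi> s \<theta> * \<pi> s \<theta>') \<le> q \<theta> * q' \<theta>' * (\<pi> s \<theta> * \<pi> s \<theta>')"
      using LR that \<pi>(1) unfolding LR_ge_def by (intro mult_right_mono) auto
    then show ?thesis unfolding u_def u'_def by (simp add: algebra_simps)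
  qed
  then have "sum u' Theta * (\<Sum>\<theta>\<in>Theta. u \<theta> * a \<theta>) \<le> sum u Theta * (\<Sum>\<theta>\<in>Theta. u' \<theta> * a \<theta>)"
    using mono by (rule likelihood_ratio_cross_sum_le)
  then show ?thesis
    using pos unfolding posterior_expectation u_def u'_def by (simp add: divide_simps mult.commute)
qed

lemma pay_mono_LR:
  assumes "finite Theta" "LR_ge Theta q' q" "full_support Theta q" "full_support Theta q'"
    and "signal_structure Theta S \<pi>" "s \<in> S" and A: "monotone_firm Theta A"
  shows "pay Theta A s q \<pi> \<le> pay Theta A s q' \<pi>"
  unfolding pay_def
proof (rule Max_image_mono)
  show "finite A" "A \<noteq> {}" using A by (auto simp: monotone_firm_def)
next
  fix a assume "a \<in> A"
  then show "(\<Sum>\<theta>\<in>Theta. posterior Theta q \<pi> s \<theta> * a \<theta>)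
               \<le> (\<Sum>\<theta>\<in>Theta. posterior Theta q' \<pi> s \<theta> * a \<theta>)"
    using assms
    by (intro posterior_expectation_mono_LR)
       (auto simp: full_support_def signal_structure_def monotone_firm_def monotone_task_def
             intro: less_imp_le)
qed

lemma avg_pay_eq_sum_signals:
  "avg_pay Theta A p q S \<pi> = (\<Sum>s\<in>S. (\<Sum>\<theta>\<in>Theta. p \<theta> * \<pi> s \<theta>) * pay Theta A s q \<pi>)"
  unfolding avg_pay_def
  by (simp add: sum_distrib_left sum_distrib_right mult.assoc sum.swap[of _ Theta])

lemma signal_probability_pos:
  assumes "finite Theta" "\<And>\<theta>. \<theta> \<in> Theta \<Longrightarrow> 0 < p \<theta>" "signal_structure Theta S \<pi>" "s \<in> S"
  shows "0 < (\<Sum>\<theta>\<in>Theta. p \<theta> * \<pi> s \<theta>)"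
proof -
  obtain \<theta> where "\<theta> \<in> Theta" "0 < \<pi> s \<theta>"
    using assms(3,4) unfolding signal_structure_def by blast
  then show ?thesis
    using assms by (intro sum_pos2) (auto simp: signal_structure_def less_imp_le)
qed

lemma avg_pay_mono:
  assumes "\<And>\<theta>. \<theta> \<in> Theta \<Longrightarrow> 0 \<le> p \<theta>" "signal_structure Theta S \<pi>"
    and "\<And>s. s \<in> S \<Longrightarrow> pay Theta A s q \<pi> \<le> pay Theta A s q' \<pi>"
  shows "avg_pay Theta A p q S \<pi> \<le> avg_pay Theta A p q' S \<pi>"
  unfolding avg_pay_eq_sum_signals
  using assms by (intro sum_mono mult_left_mono sum_nonneg mult_nonneg_nonneg)
    (auto simp: signal_structure_def)

lemma avg_pay_strict_mono:
  assumes "finite Theta" "\<And>\<theta>. \<theta> \<in> Theta \<Longrightarrow> 0 < p \<theta>" "signal_structure Theta S \<pi>"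
    and "\<And>s. s \<in> S \<Longrightarrow> pay Theta A s q \<pi> \<le> pay Theta A s q' \<pi>"
    and "s\<^sub>0 \<in> S" "pay Theta A s\<^sub>0 q \<pi> < pay Theta A s\<^sub>0 q' \<pi>"
  shows "avg_pay Theta A p q S \<pi> < avg_pay Theta A p q' S \<pi>"
  unfolding avg_pay_eq_sum_signals
proof (rule sum_strict_mono_ex1)
  show "finite S" using assms(3) by (simp add: signal_structure_def)
  show "\<forall>s\<in>S. (\<Sum>\<theta>\<in>Theta. p \<theta> * \<pi> s \<theta>) * pay Theta A s q \<pi>
             \<le> (\<Sum>\<theta>\<in>Theta. p \<theta> * \<pi> s \<theta>) * pay Theta A s q' \<pi>"
    using assms signal_probability_pos[OF assms(1-3)] by (auto intro: mult_left_mono less_imp_le)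
  show "\<exists>s\<in>S. (\<Sum>\<theta>\<in>Theta. p \<theta> * \<pi> s \<theta>) * pay Theta A s q \<pi>
             < (\<Sum>\<theta>\<in>Theta. p \<theta> * \<pi> s \<theta>) * pay Theta A s q' \<pi>"
    using assms signal_probability_pos[OF assms(1-3)] by (intro bexI[of _ s\<^sub>0]) auto
qed

lemma avg_pay_mono_LR:
  assumes "finite Theta" "full_support Theta p" "full_support Theta q" "full_support Theta q'"
    and "LR_ge Theta q' q" "signal_structure Theta S \<pi>" "monotone_firm Theta A"
  shows "avg_pay Theta A p q S \<pi> \<le> avg_pay Theta A p q' S \<pi>"
  using assms pay_mono_LR[OF assms(1,5,3,4,6) _ assms(7)]
  by (intro avg_pay_mono) (auto simp: full_support_def less_imp_le)

definition deterministic_signal :: "(real \<Rightarrow> 's) \<Rightarrow> 's \<Rightarrow> real \<Rightarrow> real" where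
  "deterministic_signal g s \<theta> = (if g \<theta> = s then 1 else 0)"

lemma signal_structure_deterministic_signal:
  assumes "finite Theta" "Theta \<noteq> {}"
  shows "signal_structure Theta (g ` Theta) (deterministic_signal g)"
  using assms unfolding signal_structure_def deterministic_signal_def
  by (auto simp: sum.delta')

lemma pay_deterministic_signal:
  assumes "finite Theta"
  shows "pay Theta A s q (deterministic_signal g)
     = Max ((\<lambda>a. (\<Sum>\<theta>\<in>{\<theta>\<in>Theta. g \<theta> = s}. q \<theta> * a \<theta>) / (\<Sum>\<theta>\<in>{\<theta>\<in>Theta. g \<theta> = s}. q \<theta>)) ` A)"
proof -
  have "(\<Sum>\<theta>\<in>Theta. q \<theta> * deterministic_signal g s \<theta> * f \<theta>) = (\<Sum>\<theta>\<in>{\<theta>\<in>Theta. g \<theta> = s}. q \<theta> * f \<theta>)"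
    for f :: "real \<Rightarrow> real"
    using assms by (auto simp: sum.inter_filter deterministic_signal_def intro!: sum.cong)
  from this this[of "\<lambda>_. 1"] show ?thesis
    unfolding pay_def posterior_expectation by simp
qed

text \<open>Signals are natural numbers: t' sends the same signal as t, every other type its own index.\<close>

definition pool :: "real set \<Rightarrow> real \<Rightarrow> real \<Rightarrow> real \<Rightarrow> nat" where
  "pool Theta t t' \<theta> = to_nat_on Theta (if \<theta> = t' then t else \<theta>)"

lemma pool_cell:
  assumes "finite Theta" "t \<in> Theta" "t' \<in> Theta" "\<theta> \<in> Theta"
  shows "{\<theta>'\<in>Theta. pool Theta t t' \<theta>' = pool Theta t t' \<theta>}
           = (if \<theta> \<in> {t, t'} then {t, t'} else {\<theta>})"
proof -
  have "inj_on (to_nat_on Theta) Theta"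
    using assms(1) by (intro inj_on_to_nat_on countable_finite)
  then show ?thesis
    using assms unfolding pool_def by (auto dest: inj_onD split: if_splits)
qed

lemma pay_pool_revealed:
  assumes "finite Theta" "t \<in> Theta" "t' \<in> Theta" "\<theta> \<in> Theta - {t, t'}" "0 < q \<theta>"
  shows "pay Theta A (pool Theta t t' \<theta>) q (deterministic_signal (pool Theta t t'))
           = Max ((\<lambda>a. a \<theta>) ` A)"
  using assms by (simp add: pay_deterministic_signal pool_cell)

lemma pay_pool_pooled_strict_mono:
  assumes "finite Theta" "t \<in> Theta" "t' \<in> Theta" "t < t'"
    and "\<And>\<theta>. \<theta> \<in> Theta \<Longrightarrow> 0 < q \<theta>" "\<And>\<theta>. \<theta> \<in> Theta \<Longrightarrow> 0 < q' \<theta>"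
    and "q t * q' t' < q t' * q' t" "monotone_firm Theta A"
  shows "pay Theta A (pool Theta t t' t) q' (deterministic_signal (pool Theta t t'))
           < pay Theta A (pool Theta t t' t) q (deterministic_signal (pool Theta t t'))"
proof -
  have "{\<theta>\<in>Theta. pool Theta t t' \<theta> = pool Theta t t' t} = {t, t'}"
    using pool_cell[OF assms(1-3,2)] by simp
  then show ?thesis
    using assms unfolding pay_deterministic_signal[OF assms(1)]
    by (intro Max_image_strict_mono)
       (auto simp: monotone_firm_def monotone_task_def intro!: two_point_mean_strict_mono)
qed

lemma avg_pay_pool_less:
  assumes "finite Theta" "t \<in> Theta" "t' \<in> Theta" "t < t'" "full_support Theta p"
    and "full_support Theta q" "full_support Theta q'"
    and "q t * q' t' < q t' * q' t" "monotone_firm Theta A"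
  shows "avg_pay Theta A p q' (pool Theta t t' ` Theta) (deterministic_signal (pool Theta t t'))
       < avg_pay Theta A p q (pool Theta t t' ` Theta) (deterministic_signal (pool Theta t t'))"
proof -
  let ?pay = "\<lambda>s r. pay Theta A s r (deterministic_signal (pool Theta t t'))"
  have pos: "\<And>\<theta>. \<theta> \<in> Theta \<Longrightarrow> 0 < p \<theta>" "\<And>\<theta>. \<theta> \<in> Theta \<Longrightarrow> 0 < q \<theta>"
    "\<And>\<theta>. \<theta> \<in> Theta \<Longrightarrow> 0 < q' \<theta>"
    using assms(5-7) by (auto simp: full_support_def)
  have pooled: "?pay (pool Theta t t' t) q' < ?pay (pool Theta t t' t) q"
    using assms by (intro pay_pool_pooled_strict_mono) (auto simp: pos)
  have "?pay s q' \<le> ?pay s q" if s: "s \<in> pool Theta t t' ` Theta" for s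
  proof -
    obtain \<theta> where "\<theta> \<in> Theta" "s = pool Theta t t' \<theta>" using s by blast
    moreover have "pool Theta t t' t' = pool Theta t t' t" by (simp add: pool_def)
    ultimately show ?thesis
      using assms pooled pos pay_pool_revealed[of Theta t t' \<theta>]
      by (cases "\<theta> \<in> {t, t'}") auto
  qed
  then show ?thesis
    using assms pooled pos
    by (intro avg_pay_strict_mono[where s\<^sub>0 = "pool Theta t t' t"] signal_structure_deterministic_signal)
       auto
qed

lemma avg_pay_less_not_LR:
  assumes "finite Theta" "full_support Theta p" "full_support Theta q" "full_support Theta q'"
    and "\<not> LR_ge Theta q' q"
  obtains \<pi> :: "nat \<Rightarrow> real \<Rightarrow> real" and S where "signal_structure Theta S \<pi>"
    "\<And>A. monotone_firm Theta A \<Longrightarrow> avg_pay Theta A p q' S \<pi> < avg_pay Theta A p q S \<pi>"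
proof -
  obtain t t' where tt': "t \<in> Theta" "t' \<in> Theta" "t < t'" "q t * q' t' < q t' * q' t"
    using assms(5) unfolding LR_ge_def by (auto simp: not_le)
  show ?thesis
  proof (rule that)
    show "signal_structure Theta (pool Theta t t' ` Theta) (deterministic_signal (pool Theta t t'))"
      using assms(1) tt' by (intro signal_structure_deterministic_signal) auto
  qed (use assms tt' avg_pay_pool_less in auto)
qed

theorem lemma1:
  fixes Theta :: "real set" and p q q' :: "real \<Rightarrow> real"
  assumes "finite Theta" and "card Theta \<ge> 2"
    and "full_support Theta p" and "full_support Theta q" and "full_support Theta q'"
  shows "(LR_ge Theta q' q \<longrightarrow>
            (\<forall>(S :: 's set) \<pi> A. signal_structure Theta S \<pi> \<and> monotone_firm Theta A \<longrightarrow>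
               avg_pay Theta A p q' S \<pi> \<ge> avg_pay Theta A p q S \<pi>))
       \<and> (\<not> LR_ge Theta q' q \<longrightarrow>
            (\<exists>(S :: nat set) \<pi>. signal_structure Theta S \<pi> \<and>
               (\<forall>A. monotone_firm Theta A \<longrightarrow>
                  avg_pay Theta A p q' S \<pi> < avg_pay Theta A p q S \<pi>)))"
  using avg_pay_mono_LR[OF assms(1,3-5)] avg_pay_less_not_LR[OF assms(1,3-5)] by blast

end
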